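(* Let $G$ be a simple algebraic group over an uncountable algebraically closed field, let $C_1,\dots,C_e$ be noncentral conjugacy classes of $G$ and $\Omega=C_1\times\dots\times C_e$. If there is a tuple $(x_1,\dots,x_e)\in\Omega$ such that $\langle x_1,\dots,x_e\rangle$ is Zariski dense in $G$, then generic tuples in $\Omega$ generate a Zariski dense subgroup of $G$; that is, the set of tuples in $\Omega$ generating a Zariski dense subgroup contains the complement in $\Omega$ of a countable union of proper closed subvarieties of $\Omega$.
   Context: $\Omega$ is an irreducible variety. *)

theory Defs
  imports "HOL-Analysis.Analysis" "HOL-Computational_Algebra.Polynomial"
begin

inductive_set polyfun :: "(('c \<Rightarrow> 'k::comm_ring_1) \<Rightarrow> 'k) set" where
  pf_const: "(\<lambda>_. a) \<in> polyfun"
| pf_var: "(\<lambda>x. x v) \<in> polyfun"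
| pf_add: "p \<in> polyfun \<Longrightarrow> q \<in> polyfun \<Longrightarrow> (\<lambda>x. p x + q x) \<in> polyfun"
| pf_mult: "p \<in> polyfun \<Longrightarrow> q \<in> polyfun \<Longrightarrow> (\<lambda>x. p x * q x) \<in> polyfun"

definition zariski_closed :: "('c \<Rightarrow> 'k::comm_ring_1) set \<Rightarrow> bool" where
  "zariski_closed S \<longleftrightarrow> (\<exists>P \<subseteq> polyfun. S = {x. \<forall>p\<in>P. p x = 0})"

text \<open>Relatively Zariski closed subsets Z of a set Y, where points of Y are given
  affine coordinates by the map phi.\<close>
definition zclosed_in :: "('a \<Rightarrow> ('c \<Rightarrow> 'k::comm_ring_1)) \<Rightarrow> 'a set \<Rightarrow> 'a set \<Rightarrow> bool" where
  "zclosed_in phi Y Z \<longleftrightarrow> Z \<subseteq> Y \<and> (\<exists>S. zariski_closed S \<and> Z = {y\<in>Y. phi y \<in> S})"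

definition zirreducible :: "('a \<Rightarrow> ('c \<Rightarrow> 'k::comm_ring_1)) \<Rightarrow> 'a set \<Rightarrow> bool" where
  "zirreducible phi Y \<longleftrightarrow> Y \<noteq> {} \<and>
     (\<forall>Z1 Z2. zclosed_in phi Y Z1 \<and> zclosed_in phi Y Z2 \<and> Y = Z1 \<union> Z2 \<longrightarrow> Z1 = Y \<or> Z2 = Y)"

definition zdense_in :: "('a \<Rightarrow> ('c \<Rightarrow> 'k::comm_ring_1)) \<Rightarrow> 'a set \<Rightarrow> 'a set \<Rightarrow> bool" where
  "zdense_in phi Y Z \<longleftrightarrow> Z \<subseteq> Y \<and> (\<forall>W. zclosed_in phi Y W \<and> Z \<subseteq> W \<longrightarrow> W = Y)"

definition mat_coords :: "'k^'n^'n \<Rightarrow> ('n \<times> 'n \<Rightarrow> 'k)" where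
  "mat_coords A = (\<lambda>(i,j). A $ i $ j)"

definition tup_coords :: "('e \<Rightarrow> 'k^'n^'n) \<Rightarrow> ('e \<times> 'n \<times> 'n \<Rightarrow> 'k)" where
  "tup_coords x = (\<lambda>(e,i,j). x e $ i $ j)"

definition GLn :: "('k::field^'n^'n) set" where
  "GLn = {A. invertible A}"

definition mat_subgroup :: "('k::field^'n^'n) set \<Rightarrow> bool" where
  "mat_subgroup H \<longleftrightarrow> H \<subseteq> GLn \<and> mat 1 \<in> H \<and>
     (\<forall>A\<in>H. \<forall>B\<in>H. A ** B \<in> H) \<and> (\<forall>A\<in>H. matrix_inv A \<in> H)"

definition algebraic_group :: "('k::field^'n^'n) set \<Rightarrow> bool" where
  "algebraic_group G \<longleftrightarrow> mat_subgroup G \<and> zclosed_in mat_coords GLn G"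

definition normal_in :: "('k::field^'n^'n) set \<Rightarrow> ('k^'n^'n) set \<Rightarrow> bool" where
  "normal_in N G \<longleftrightarrow> (\<forall>g\<in>G. \<forall>x\<in>N. g ** x ** matrix_inv g \<in> N)"

text \<open>Simple algebraic group: connected, non-commutative, and without nontrivial proper
  closed connected normal subgroups.\<close>
definition simple_algebraic_group :: "('k::field^'n^'n) set \<Rightarrow> bool" where
  "simple_algebraic_group G \<longleftrightarrow> algebraic_group G \<and> zirreducible mat_coords G \<and>
     (\<exists>A\<in>G. \<exists>B\<in>G. A ** B \<noteq> B ** A) \<and>
     (\<forall>N. mat_subgroup N \<and> N \<subseteq> G \<and> zclosed_in mat_coords G N \<and> zirreducible mat_coords N
          \<and> normal_in N G \<longrightarrow> N = {mat 1} \<or> N = G)"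

definition conj_class :: "('k::field^'n^'n) set \<Rightarrow> 'k^'n^'n \<Rightarrow> ('k^'n^'n) set" where
  "conj_class G x = {g ** x ** matrix_inv g | g. g \<in> G}"

definition central_in :: "('k::field^'n^'n) set \<Rightarrow> 'k^'n^'n \<Rightarrow> bool" where
  "central_in G x \<longleftrightarrow> (\<forall>g\<in>G. g ** x = x ** g)"

inductive_set gen_subgroup :: "('k::field^'n^'n) set \<Rightarrow> ('k^'n^'n) set" for S where
  gs_one: "mat 1 \<in> gen_subgroup S"
| gs_gen: "s \<in> S \<Longrightarrow> s \<in> gen_subgroup S"
| gs_mult: "a \<in> gen_subgroup S \<Longrightarrow> b \<in> gen_subgroup S \<Longrightarrow> a ** b \<in> gen_subgroup S"
| gs_inv: "a \<in> gen_subgroup S \<Longrightarrow> matrix_inv a \<in> gen_subgroup S"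

definition alg_closed_field :: "'k::field itself \<Rightarrow> bool" where
  "alg_closed_field _ \<longleftrightarrow> (\<forall>p::'k poly. degree p > 0 \<longrightarrow> (\<exists>z. poly p z = 0))"

end

theory Submission
  imports Defs "Jordan_Normal_Form.Determinant"
begin

text \<open>A subgroup of G is Zariski dense iff, for every d, each linear relation among the monomials
  of degree at most d in the matrix entries that holds on the subgroup also holds on G. The group
  generated by a tuple x consists of the values of words in the x i and their inverses, and
  multiplying by a power of determinants makes the vector of degree-d monomials of a word value
  polynomial in x. For each d fix words and monomials giving a nonzero minor of maximal size of
  these vectors at the dense tuple x0. As a polynomial in x, this minor cuts out a proper closed
  subset F d of Omega. At any x outside F d the chosen words still give a nonzero minor, so every
  relation satisfied by the words at x holds on G. Hence x generates a dense subgroup as soon as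
  it avoids all F d.\<close>

section \<open>Polynomial functions and Zariski density\<close>

lemma polyfun_sum:
  "finite S \<Longrightarrow> (\<And>s. s \<in> S \<Longrightarrow> f s \<in> polyfun) \<Longrightarrow> (\<lambda>x. \<Sum>s\<in>S. f s x) \<in> polyfun"
  by (induction S rule: finite_induct) (auto intro: polyfun.intros)

lemma polyfun_prod:
  "finite S \<Longrightarrow> (\<And>s. s \<in> S \<Longrightarrow> f s \<in> polyfun) \<Longrightarrow> (\<lambda>x. \<Prod>s\<in>S. f s x) \<in> polyfun"
  by (induction S rule: finite_induct) (auto intro: polyfun.intros)

lemma polyfun_power: "p \<in> polyfun \<Longrightarrow> (\<lambda>x. p x ^ n) \<in> polyfun"
  by (induction n) (auto intro: polyfun.intros)

lemma polyfun_if: "p \<in> polyfun \<Longrightarrow> q \<in> polyfun \<Longrightarrow> (\<lambda>x. if P then p x else q x) \<in> polyfun"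
  by (cases P) auto

lemma polyfun_cmult: "p \<in> polyfun \<Longrightarrow> (\<lambda>x. a * p x) \<in> polyfun"
  by (drule polyfun.pf_mult[OF polyfun.pf_const]) simp

definition monomial :: "('c \<Rightarrow> 'k::comm_ring_1) \<Rightarrow> 'c list \<Rightarrow> 'k" where
  "monomial y l = prod_list (map y l)"

definition monomials_upto :: "nat \<Rightarrow> 'c list set" where
  "monomials_upto d = {l. length l \<le> d}"

lemma finite_monomials_upto: "finite (monomials_upto d :: 'c::finite list set)"
  using finite_lists_length_le[of "UNIV :: 'c set" d] by (simp add: monomials_upto_def)

lemma monomial_append: "monomial y (l @ l') = monomial y l * monomial y l'"
  by (simp add: monomial_def)

lemma polyfun_monomial_comp:
  "(\<And>v. (\<lambda>x. f x v) \<in> polyfun) \<Longrightarrow> (\<lambda>x. monomial (f x) l) \<in> polyfun"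
  by (induction l) (auto simp: monomial_def intro: polyfun.intros)

lemma polyfun_monomial: "(\<lambda>y. monomial y l) \<in> polyfun"
  by (rule polyfun_monomial_comp) (rule polyfun.pf_var)

lemma polyfun_monomial_expansion:
  assumes "p \<in> polyfun"
  shows "\<exists>S c. finite S \<and> (\<forall>y. p y = (\<Sum>l\<in>S. c l * monomial y l))"
  using assms
proof (induction rule: polyfun.induct)
  case (pf_const a)
  show ?case by (intro exI[of _ "{[]}"] exI[of _ "\<lambda>_. a"]) (simp add: monomial_def)
next
  case (pf_var v)
  show ?case by (intro exI[of _ "{[v]}"] exI[of _ "\<lambda>_. 1"]) (simp add: monomial_def)
next
  case (pf_add p q)
  then obtain S1 c1 S2 c2 where S1: "finite S1" "\<forall>y. p y = (\<Sum>l\<in>S1. c1 l * monomial y l)"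
    and S2: "finite S2" "\<forall>y. q y = (\<Sum>l\<in>S2. c2 l * monomial y l)" by blast
  define c where "c l = (if l \<in> S1 then c1 l else 0) + (if l \<in> S2 then c2 l else 0)" for l
  have "(\<Sum>l\<in>S1 \<union> S2. c l * monomial y l) = p y + q y" for y
  proof -
    have "(\<Sum>l\<in>S1 \<union> S2. c l * monomial y l) =
       (\<Sum>l\<in>S1 \<union> S2. if l \<in> S1 then c1 l * monomial y l else 0) +
       (\<Sum>l\<in>S1 \<union> S2. if l \<in> S2 then c2 l * monomial y l else 0)"
      unfolding sum.distrib[symmetric] by (intro sum.cong) (auto simp: c_def distrib_right)
    also have "\<dots> = p y + q y"
      using S1 S2 by (simp add: sum.inter_restrict[symmetric] Int_absorb1)
    finally show ?thesis .
  qed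
  then show ?case using S1 S2 by (intro exI[of _ "S1 \<union> S2"] exI[of _ c]) simp
next
  case (pf_mult p q)
  then obtain S1 c1 S2 c2 where S1: "finite S1" "\<forall>y. p y = (\<Sum>l\<in>S1. c1 l * monomial y l)"
    and S2: "finite S2" "\<forall>y. q y = (\<Sum>l\<in>S2. c2 l * monomial y l)" by blast
  define h where "h = (\<lambda>(l :: 'a list, l'). l @ l')"
  define T where "T = h ` (S1 \<times> S2)"
  define c where "c l = (\<Sum>ll'\<in>{ll' \<in> S1 \<times> S2. h ll' = l}. c1 (fst ll') * c2 (snd ll'))" for l
  have finT: "finite T" using S1 S2 unfolding T_def by simp
  have "(\<Sum>l\<in>T. c l * monomial y l) = p y * q y" for y
  proof -
    have "(\<Sum>l\<in>T. c l * monomial y l) =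
        (\<Sum>l\<in>T. \<Sum>ll'\<in>{ll' \<in> S1 \<times> S2. h ll' = l}. c1 (fst ll') * c2 (snd ll') * monomial y (h ll'))"
      unfolding c_def by (simp add: sum_distrib_right)
    also have "\<dots> = (\<Sum>ll'\<in>S1 \<times> S2. c1 (fst ll') * c2 (snd ll') * monomial y (h ll'))"
      using S1 S2 finT by (intro sum.group) (auto simp: T_def)
    also have "\<dots> = (\<Sum>l\<in>S1. \<Sum>l'\<in>S2. (c1 l * monomial y l) * (c2 l' * monomial y l'))"
      by (simp add: sum.cartesian_product) (intro sum.cong refl, auto simp: h_def monomial_append mult_ac)
    also have "\<dots> = p y * q y" using S1 S2 by (simp add: sum_product)
    finally show ?thesis .
  qed
  then show ?case using finT by (intro exI[of _ T] exI[of _ c]) simp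
qed

lemma polyfun_eq_sum_monomials_upto:
  fixes p :: "('c::finite \<Rightarrow> 'k::comm_ring_1) \<Rightarrow> 'k"
  assumes "p \<in> polyfun"
  shows "\<exists>d c. \<forall>y. p y = (\<Sum>l\<in>monomials_upto d. c l * monomial y l)"
proof -
  obtain S c where S: "finite S" "\<forall>y. p y = (\<Sum>l\<in>S. c l * monomial y l)"
    using polyfun_monomial_expansion[OF assms] by blast
  define d where "d = Max (insert 0 (length ` S))"
  have "S \<subseteq> monomials_upto d" using S(1) by (auto simp: monomials_upto_def d_def)
  then have "(\<Sum>l\<in>monomials_upto d. (if l \<in> S then c l else 0) * monomial y l) =
      (\<Sum>l\<in>S. c l * monomial y l)" for y
    by (simp add: if_distrib[of "\<lambda>a. a * _"] sum.If_cases finite_monomials_upto Int_absorb1)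
  then show ?thesis using S(2) by (intro exI[of _ d] exI[of _ "\<lambda>l. if l \<in> S then c l else 0"]) simp
qed

lemma zdense_in_iff_polyfun:
  assumes "Z \<subseteq> Y"
  shows "zdense_in phi Y Z \<longleftrightarrow>
    (\<forall>p\<in>polyfun. (\<forall>z\<in>Z. p (phi z) = 0) \<longrightarrow> (\<forall>y\<in>Y. p (phi y) = 0))"
proof
  assume dense: "zdense_in phi Y Z"
  show "\<forall>p\<in>polyfun. (\<forall>z\<in>Z. p (phi z) = 0) \<longrightarrow> (\<forall>y\<in>Y. p (phi y) = 0)"
  proof (intro ballI impI)
    fix p y assume p: "p \<in> polyfun" and "\<forall>z\<in>Z. p (phi z) = 0" and y: "y \<in> Y"
    moreover have "zclosed_in phi Y {y\<in>Y. p (phi y) = 0}"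
      unfolding zclosed_in_def zariski_closed_def
      using p by (intro conjI exI[of _ "{q. p q = 0}"] exI[of _ "{p}"]) auto
    ultimately show "p (phi y) = 0"
      using dense assms unfolding zdense_in_def by blast
  qed
next
  assume "\<forall>p\<in>polyfun. (\<forall>z\<in>Z. p (phi z) = 0) \<longrightarrow> (\<forall>y\<in>Y. p (phi y) = 0)"
  then show "zdense_in phi Y Z"
    using assms unfolding zdense_in_def zclosed_in_def zariski_closed_def by blast
qed

lemma zdense_in_iff_monomial_relations:
  fixes phi :: "'a \<Rightarrow> 'c::finite \<Rightarrow> 'k::comm_ring_1"
  assumes "Z \<subseteq> Y"
  shows "zdense_in phi Y Z \<longleftrightarrow>
    (\<forall>d c. (\<forall>z\<in>Z. (\<Sum>l\<in>monomials_upto d. c l * monomial (phi z) l) = 0) \<longrightarrow>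
           (\<forall>y\<in>Y. (\<Sum>l\<in>monomials_upto d. c l * monomial (phi y) l) = 0))"
proof -
  have "(\<lambda>y :: 'c \<Rightarrow> 'k. \<Sum>l\<in>monomials_upto d. c l * monomial y l) \<in> polyfun" for d c
    by (intro polyfun_sum polyfun_cmult polyfun_monomial finite_monomials_upto)
  moreover have "(\<forall>z\<in>Z. p (phi z) = 0) \<longrightarrow> (\<forall>y\<in>Y. p (phi y) = 0)"
    if p: "p \<in> polyfun" and relations: "\<forall>d c. (\<forall>z\<in>Z. (\<Sum>l\<in>monomials_upto d. c l * monomial (phi z) l) = 0) \<longrightarrow>
           (\<forall>y\<in>Y. (\<Sum>l\<in>monomials_upto d. c l * monomial (phi y) l) = 0)" for p
    using polyfun_eq_sum_monomials_upto[OF p] relations by auto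
  ultimately show ?thesis
    unfolding zdense_in_iff_polyfun[OF assms] by blast
qed

section \<open>Minors of maximal size\<close>

lemma det_mat_nonzero_iff_kernel:
  fixes f :: "nat \<times> nat \<Rightarrow> 'k::field"
  shows "Determinant.det (Matrix.mat n n f) \<noteq> 0 \<longleftrightarrow>
    (\<forall>v. (\<forall>i<n. (\<Sum>j<n. f (i,j) * v j) = 0) \<longrightarrow> (\<forall>j<n. v j = 0))"
proof -
  have "Matrix.mat n n f \<in> carrier_mat n n" by simp
  note kernel = det_0_iff_vec_prod_zero_field[OF this]
  have mult_vec: "(Matrix.mat n n f *\<^sub>v v) $ i = (\<Sum>j<n. f (i,j) * v $ j)"
    if "v \<in> carrier_vec n" "i < n" for v i
    using that by (auto simp: mult_mat_vec_def scalar_prod_def row_def atLeast0LessThan)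
  show ?thesis
  proof
    assume "Determinant.det (Matrix.mat n n f) \<noteq> 0"
    then have trivial: "v = 0\<^sub>v n" if "v \<in> carrier_vec n" "Matrix.mat n n f *\<^sub>v v = 0\<^sub>v n" for v
      using kernel that by blast
    show "\<forall>v. (\<forall>i<n. (\<Sum>j<n. f (i,j) * v j) = 0) \<longrightarrow> (\<forall>j<n. v j = 0)"
    proof (intro allI impI)
      fix v j assume "\<forall>i<n. (\<Sum>j<n. f (i,j) * v j) = 0" and j: "j < n"
      then have "Matrix.mat n n f *\<^sub>v Matrix.vec n v = 0\<^sub>v n"
        using mult_vec by (intro eq_vecI) auto
      then have "Matrix.vec n v = 0\<^sub>v n" using trivial by simp
      then show "v j = 0" using j by (metis index_vec index_zero_vec(1))
    qed
  next
    assume trivial: "\<forall>v. (\<forall>i<n. (\<Sum>j<n. f (i,j) * v j) = 0) \<longrightarrow> (\<forall>j<n. v j = 0)"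
    show "Determinant.det (Matrix.mat n n f) \<noteq> 0"
    proof
      assume "Determinant.det (Matrix.mat n n f) = 0"
      with kernel obtain v where v: "v \<in> carrier_vec n" "v \<noteq> 0\<^sub>v n" "Matrix.mat n n f *\<^sub>v v = 0\<^sub>v n"
        by blast
      then have "\<forall>i<n. (\<Sum>j<n. f (i,j) * v $ j) = 0"
        using mult_vec by (metis index_zero_vec(1))
      with trivial have "v = 0\<^sub>v n" using v(1) by (intro eq_vecI) auto
      with v(2) show False by simp
    qed
  qed
qed

lemma det_mat_nonzero_iff_left_kernel:
  fixes f :: "nat \<times> nat \<Rightarrow> 'k::field"
  shows "Determinant.det (Matrix.mat n n f) \<noteq> 0 \<longleftrightarrow>
    (\<forall>u. (\<forall>j<n. (\<Sum>i<n. u i * f (i,j)) = 0) \<longrightarrow> (\<forall>i<n. u i = 0))"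
proof -
  have "transpose_mat (Matrix.mat n n f) = Matrix.mat n n (\<lambda>(i,j). f (j,i))"
    by (intro eq_matI) auto
  then have "Determinant.det (Matrix.mat n n f) = Determinant.det (Matrix.mat n n (\<lambda>(i,j). f (j,i)))"
    using det_transpose[of "Matrix.mat n n f" n] by simp
  also have "\<dots> \<noteq> 0 \<longleftrightarrow>
      (\<forall>v. (\<forall>i<n. (\<Sum>j<n. (\<lambda>(i,j). f (j,i)) (i,j) * v j) = 0) \<longrightarrow> (\<forall>j<n. v j = 0))"
    by (rule det_mat_nonzero_iff_kernel)
  finally show ?thesis by (simp add: mult.commute)
qed

definition minor :: "nat \<Rightarrow> (nat \<Rightarrow> 'l) \<Rightarrow> (nat \<Rightarrow> 'l \<Rightarrow> 'k::comm_ring_1) \<Rightarrow> 'k" where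
  "minor r ls z = Determinant.det (Matrix.mat r r (\<lambda>(a, b). z b (ls a)))"

lemma minor_adjugate:
  fixes z :: "nat \<Rightarrow> 'l \<Rightarrow> 'k::field"
  obtains g where "\<forall>i<r. \<forall>j<r. (\<Sum>k<r. g (i,k) * z j (ls k)) = (if i = j then minor r ls z else 0)"
proof -
  define A where "A = Matrix.mat r r (\<lambda>(a, b). z b (ls a))"
  have "A \<in> carrier_mat r r" by (simp add: A_def)
  note adj = adj_mat[OF this]
  have "(\<Sum>k<r. adj_mat A $$ (i,k) * z j (ls k)) = (if i = j then minor r ls z else 0)"
    if "i < r" "j < r" for i j
  proof -
    have "(adj_mat A * A) $$ (i,j) = (Determinant.det A \<cdot>\<^sub>m 1\<^sub>m r) $$ (i,j)" using adj(3) by simp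
    then show ?thesis
      using that adj(1) by (auto simp: A_def minor_def scalar_prod_def atLeast0LessThan)
  qed
  then show ?thesis using that by blast
qed

lemma minor_bordered_nonzero:
  fixes z :: "nat \<Rightarrow> 'l \<Rightarrow> 'k::field"
  assumes "\<Delta> \<noteq> 0"
    and adj: "\<forall>i<r. \<forall>j<r. (\<Sum>k<r. g (i,k) * z j (ls k)) = (if i = j then \<Delta> else 0)"
    and schur: "\<Delta> * v l - (\<Sum>b<r. z b l * (\<Sum>a<r. g (b,a) * v (ls a))) \<noteq> 0"
  shows "minor (Suc r) (ls(r := l)) (z(r := v)) \<noteq> 0"
  unfolding minor_def det_mat_nonzero_iff_kernel
proof (intro allI impI)
  fix u j
  assume kernel: "\<forall>i<Suc r. (\<Sum>j<Suc r. (\<lambda>(a, b). (z(r := v)) b ((ls(r := l)) a)) (i,j) * u j) = 0"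
    and j: "j < Suc r"
  let ?t = "\<lambda>k. \<Sum>a<r. g (k,a) * v (ls a)"
  have row: "(\<Sum>j<r. z j (ls i) * u j) + v (ls i) * u r = 0" if "i < r" for i
    using kernel[rule_format, of i] that by simp
  have last_row: "(\<Sum>j<r. z j l * u j) + v l * u r = 0"
    using kernel[rule_format, of r] by simp
  have solved: "\<Delta> * u k + u r * ?t k = 0" if k: "k < r" for k
  proof -
    have "0 = (\<Sum>i<r. g (k,i) * ((\<Sum>j<r. z j (ls i) * u j) + v (ls i) * u r))"
      using row by simp
    also have "\<dots> = (\<Sum>i<r. \<Sum>j<r. g (k,i) * z j (ls i) * u j) + u r * ?t k"
      by (simp add: distrib_left sum.distrib sum_distrib_left mult.assoc mult.left_commute)
        (simp add: mult.commute mult.left_commute)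
    also have "(\<Sum>i<r. \<Sum>j<r. g (k,i) * z j (ls i) * u j) = (\<Sum>j<r. (\<Sum>i<r. g (k,i) * z j (ls i)) * u j)"
      by (subst sum.swap) (simp add: sum_distrib_right)
    also have "(\<Sum>j<r. (\<Sum>i<r. g (k,i) * z j (ls i)) * u j) = (\<Sum>j<r. (if k = j then \<Delta> else 0) * u j)"
      using adj k by (intro sum.cong) auto
    also have "\<dots> = \<Delta> * u k" using k by (simp add: if_distrib[of "\<lambda>x. x * _"] cong: if_cong)
    finally show ?thesis by simp
  qed
  have "0 = \<Delta> * ((\<Sum>j<r. z j l * u j) + v l * u r)" using last_row by simp
  also have "\<dots> = (\<Sum>j<r. z j l * (\<Delta> * u j)) + \<Delta> * v l * u r"
    by (simp add: distrib_left sum_distrib_left mult_ac)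
  also have "(\<Sum>j<r. z j l * (\<Delta> * u j)) = (\<Sum>j<r. - (u r * (z j l * ?t j)))"
  proof (intro sum.cong refl)
    fix j assume "j \<in> {..<r}"
    then have "\<Delta> * u j = - (u r * ?t j)" using solved[of j] by (simp add: eq_neg_iff_add_eq_0)
    then show "z j l * (\<Delta> * u j) = - (u r * (z j l * ?t j))"
      by (simp only: mult_minus_right mult.left_commute)
  qed
  also have "\<dots> = - (u r * (\<Sum>j<r. z j l * ?t j))"
    by (simp only: sum_negf sum_distrib_left)
  finally have "u r * (\<Delta> * v l - (\<Sum>b<r. z b l * ?t b)) = 0"
    by (simp add: right_diff_distrib mult_ac)
  with schur have "u r = 0" by simp
  with solved \<open>\<Delta> \<noteq> 0\<close> j show "u j = 0"
    by (cases "j = r") (auto simp: less_Suc_eq)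
qed

lemma inj_on_rows_if_minor_nonzero:
  fixes z :: "nat \<Rightarrow> 'l \<Rightarrow> 'k::field"
  assumes "minor r ls z \<noteq> 0"
  shows "inj_on ls {..<r}"
proof (rule inj_onI, rule ccontr)
  fix a a' assume a: "a \<in> {..<r}" and a': "a' \<in> {..<r}" and eq: "ls a = ls a'" and "a \<noteq> a'"
  define u where "u i = (if i = a then 1 else if i = a' then -1 else (0::'k))" for i
  have "(\<Sum>i<r. u i * z j (ls i)) = z j (ls a) - z j (ls a')" for j
  proof -
    have "(\<Sum>i<r. u i * z j (ls i)) =
        (\<Sum>i<r. (if i = a then z j (ls a) else 0) + (if i = a' then - z j (ls a') else 0))"
      using \<open>a \<noteq> a'\<close> by (intro sum.cong) (auto simp: u_def)
    also have "\<dots> = z j (ls a) - z j (ls a')"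
      using a a' by (simp add: sum.distrib)
    finally show ?thesis .
  qed
  with eq have "\<forall>j<r. (\<Sum>i<r. u i * z j (ls i)) = 0" by simp
  with assms a have "u a = 0" unfolding minor_def det_mat_nonzero_iff_left_kernel by auto
  then show False by (simp add: u_def)
qed

lemma exists_maximal_nonzero_minor:
  fixes E :: "'w \<Rightarrow> 'l \<Rightarrow> 'k::field"
  assumes "finite L"
  obtains r ws ls where "ls ` {..<r} \<subseteq> L" "minor r ls (\<lambda>b. E (ws b)) \<noteq> 0"
    "\<And>w l. l \<in> L \<Longrightarrow> minor (Suc r) (ls(r := l)) ((\<lambda>b. E (ws b))(r := E w)) = 0"
proof -
  define R where "R = {r. \<exists>ws ls. ls ` {..<r} \<subseteq> L \<and> minor r ls (\<lambda>b. E (ws b)) \<noteq> 0}"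
  have "r \<le> card L" if "r \<in> R" for r
  proof -
    from that obtain ws ls where "ls ` {..<r} \<subseteq> L" "minor r ls (\<lambda>b. E (ws b)) \<noteq> 0"
      unfolding R_def by blast
    then have "card {..<r} \<le> card L"
      using inj_on_rows_if_minor_nonzero card_inj_on_le assms by blast
    then show ?thesis by simp
  qed
  then have "finite R" by (intro finite_subset[of R "{..card L}"]) auto
  moreover have "0 \<in> R" by (auto simp: R_def minor_def)
  ultimately obtain m where "m \<in> R" and max: "\<And>r. r \<in> R \<Longrightarrow> r \<le> m"
    using Max_in Max_ge by blast
  then obtain ws ls where ls: "ls ` {..<m} \<subseteq> L" "minor m ls (\<lambda>b. E (ws b)) \<noteq> 0"
    unfolding R_def by blast
  have "minor (Suc m) (ls(m := l)) ((\<lambda>b. E (ws b))(m := E w)) = 0" if "l \<in> L" for w l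
  proof (rule ccontr)
    assume "minor (Suc m) (ls(m := l)) ((\<lambda>b. E (ws b))(m := E w)) \<noteq> 0"
    moreover have "(\<lambda>b. E (ws b))(m := E w) = (\<lambda>b. E ((ws(m := w)) b))" by auto
    moreover have "(ls(m := l)) ` {..<Suc m} \<subseteq> L"
      using ls(1) \<open>l \<in> L\<close> by (auto simp: lessThan_Suc)
    ultimately have "Suc m \<in> R"
      unfolding R_def by (intro CollectI exI[of _ "ws(m := w)"] exI[of _ "ls(m := l)"]) simp
    then show False using max by fastforce
  qed
  with ls that show ?thesis by blast
qed

lemma schur_complement_eq_linear_form:
  fixes v :: "'l \<Rightarrow> 'k::comm_ring_1"
  assumes L: "finite L" "l \<in> L" "ls ` {..<r} \<subseteq> L"
  shows "\<Delta> * v l - (\<Sum>b<r. e b * (\<Sum>a<r. g (b,a) * v (ls a))) =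
    (\<Sum>m\<in>L. (\<Delta> * of_bool (m = l) - (\<Sum>b<r. e b * (\<Sum>a<r. g (b,a) * of_bool (ls a = m)))) * v m)"
proof -
  have diagonal: "(\<Sum>m\<in>L. of_bool (m = l') * v m) = v l'" if "l' \<in> L" for l'
    using L(1) that by (simp add: of_bool_def if_distrib[of "\<lambda>x. x * _"] cong: if_cong)
  have "(\<Sum>m\<in>L. (\<Sum>b<r. e b * (\<Sum>a<r. g (b,a) * of_bool (ls a = m))) * v m)
      = (\<Sum>b<r. e b * (\<Sum>a<r. g (b,a) * (\<Sum>m\<in>L. of_bool (ls a = m) * v m)))"
    by (simp add: sum_distrib_left sum_distrib_right mult.assoc sum.swap[of _ L])
  also have "\<dots> = (\<Sum>b<r. e b * (\<Sum>a<r. g (b,a) * v (ls a)))"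
    using L(3) diagonal by (simp add: eq_commute[of "ls _"] image_subset_iff)
  moreover have "(\<Sum>m\<in>L. \<Delta> * of_bool (m = l) * v m) = \<Delta> * v l"
    using diagonal[OF L(2)] by (simp add: sum_distrib_left[symmetric] mult.assoc)
  ultimately show ?thesis by (simp add: left_diff_distrib sum_subtractf)
qed

lemma spanning_minor:
  fixes E :: "'w \<Rightarrow> 'l \<Rightarrow> 'k::field" and V :: "('l \<Rightarrow> 'k) set"
  assumes L: "finite L"
    and span: "\<And>c v. \<forall>w. (\<Sum>l\<in>L. c l * E w l) = 0 \<Longrightarrow> v \<in> V \<Longrightarrow> (\<Sum>l\<in>L. c l * v l) = 0"
  shows "\<exists>r ws ls. ls ` {..<r} \<subseteq> L \<and> minor r ls (\<lambda>b. E (ws b)) \<noteq> 0 \<and>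
    (\<forall>z c. (\<forall>b<r. z b \<in> V) \<longrightarrow> minor r ls z \<noteq> 0 \<longrightarrow> (\<forall>b<r. (\<Sum>l\<in>L. c l * z b l) = 0) \<longrightarrow>
       (\<forall>v\<in>V. (\<Sum>l\<in>L. c l * v l) = 0))"
proof -
  obtain r ws ls where ls: "ls ` {..<r} \<subseteq> L" and \<Delta>: "minor r ls (\<lambda>b. E (ws b)) \<noteq> 0"
    and maximal: "\<And>w l. l \<in> L \<Longrightarrow> minor (Suc r) (ls(r := l)) ((\<lambda>b. E (ws b))(r := E w)) = 0"
    using exists_maximal_nonzero_minor[OF L] by metis
  define \<Delta> where "\<Delta> = minor r ls (\<lambda>b. E (ws b))"
  obtain g where g: "\<forall>i<r. \<forall>j<r. (\<Sum>k<r. g (i,k) * E (ws j) (ls k)) = (if i = j then \<Delta> else 0)"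
    using minor_adjugate[of r "\<lambda>b. E (ws b)" ls] unfolding \<Delta>_def by metis
  txt \<open>By maximality each E w, and then by span each v in V, is determined linearly by its
    coordinates at the rows ls.\<close>
  have reconstruct: "\<Delta> * v l = (\<Sum>b<r. E (ws b) l * (\<Sum>a<r. g (b,a) * v (ls a)))"
    if "v \<in> V" "l \<in> L" for v l
  proof -
    let ?c = "\<lambda>m. \<Delta> * of_bool (m = l) - (\<Sum>b<r. E (ws b) l * (\<Sum>a<r. g (b,a) * of_bool (ls a = m)))"
    have "(\<Sum>m\<in>L. ?c m * E w m) = 0" for w
      unfolding schur_complement_eq_linear_form[OF L \<open>l \<in> L\<close> ls, where e = "\<lambda>b. E (ws b) l" and g = g, symmetric]
      using minor_bordered_nonzero[of \<Delta> r g "\<lambda>b. E (ws b)" ls "E w" l] maximal[OF \<open>l \<in> L\<close>]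
        \<Delta> g unfolding \<Delta>_def by auto
    from span[OF allI[OF this] \<open>v \<in> V\<close>] show ?thesis
      unfolding schur_complement_eq_linear_form[OF L \<open>l \<in> L\<close> ls, where e = "\<lambda>b. E (ws b) l" and g = g, symmetric]
      by simp
  qed
  have "(\<Sum>l\<in>L. c l * v l) = 0"
    if z: "\<forall>b<r. z b \<in> V" "minor r ls z \<noteq> 0" and c: "\<forall>b<r. (\<Sum>l\<in>L. c l * z b l) = 0"
      and "v \<in> V" for z c v
  proof -
    txt \<open>On V the functional c factors through the coordinates at ls as p; p kills the
      columns z b, which are independent there.\<close>
    define p where "p a = (\<Sum>l\<in>L. c l * (\<Sum>b<r. E (ws b) l * g (b,a)))" for a
    have p: "\<Delta> * (\<Sum>l\<in>L. c l * u l) = (\<Sum>a<r. p a * u (ls a))" if "u \<in> V" for u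
    proof -
      have "\<Delta> * (\<Sum>l\<in>L. c l * u l) = (\<Sum>l\<in>L. c l * (\<Delta> * u l))"
        by (simp add: sum_distrib_left mult.left_commute)
      also have "\<dots> = (\<Sum>l\<in>L. \<Sum>b<r. \<Sum>a<r. c l * E (ws b) l * g (b,a) * u (ls a))"
        by (intro sum.cong refl) (simp add: reconstruct[OF \<open>u \<in> V\<close>] sum_distrib_left mult.assoc)
      also have "\<dots> = (\<Sum>l\<in>L. \<Sum>a<r. \<Sum>b<r. c l * E (ws b) l * g (b,a) * u (ls a))"
        by (rule sum.cong[OF refl], rule sum.swap)
      also have "\<dots> = (\<Sum>a<r. \<Sum>l\<in>L. \<Sum>b<r. c l * E (ws b) l * g (b,a) * u (ls a))"
        by (rule sum.swap)
      also have "\<dots> = (\<Sum>a<r. p a * u (ls a))"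
        by (simp add: p_def sum_distrib_left sum_distrib_right mult.assoc)
      finally show ?thesis .
    qed
    have "\<forall>b<r. (\<Sum>a<r. p a * z b (ls a)) = 0"
      using p z c by (simp flip: p)
    then have "\<forall>a<r. p a = 0"
      using z(2) unfolding minor_def det_mat_nonzero_iff_left_kernel by simp
    then have "\<Delta> * (\<Sum>l\<in>L. c l * v l) = 0" using p[OF \<open>v \<in> V\<close>] by simp
    with \<Delta> show ?thesis unfolding \<Delta>_def by simp
  qed
  with ls \<Delta> show ?thesis by blast
qed

section \<open>Words in a tuple of matrices\<close>

lemma matrix_inv_mult:
  fixes A :: "'k::field^'n^'n"
  assumes "invertible A"
  shows "A ** matrix_inv A = Finite_Cartesian_Product.mat 1"
    and "matrix_inv A ** A = Finite_Cartesian_Product.mat 1"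
  using someI_ex[OF assms[unfolded invertible_def]] by (simp_all add: matrix_inv_def)

lemma matrix_inv_unique:
  fixes A B :: "'k::field^'n^'n"
  assumes "A ** B = Finite_Cartesian_Product.mat 1" "B ** A = Finite_Cartesian_Product.mat 1"
  shows "matrix_inv A = B"
proof -
  have "invertible A" using assms unfolding invertible_def by blast
  have "matrix_inv A = matrix_inv A ** (A ** B)" using assms by (simp add: matrix_mul_rid)
  also have "\<dots> = B"
    using matrix_inv_mult(2)[OF \<open>invertible A\<close>] by (simp add: matrix_mul_assoc matrix_mul_lid)
  finally show ?thesis .
qed

definition adjugate :: "'k::field^'n^'n \<Rightarrow> 'k^'n^'n" where
  "adjugate A = (\<chi> k j. Determinants.det
     ((\<chi> i l. if l = k then (if i = j then 1 else 0) else A $ i $ l) :: 'k^'n^'n))"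

lemma adjugate_eq_det_matrix_inv:
  fixes A :: "'k::field^'n^'n"
  assumes "invertible A"
  shows "adjugate A $ k $ j = Determinants.det A * matrix_inv A $ k $ j"
proof -
  define col :: "'k^'n" where "col = (\<chi> k. matrix_inv A $ k $ j)"
  have det: "Determinants.det A \<noteq> 0" using assms invertible_det_nz by blast
  have "(A *v col) $ i = (A ** matrix_inv A) $ i $ j" for i
    by (simp add: matrix_vector_mult_def matrix_matrix_mult_def col_def)
  then have "A *v col = (\<chi> i. if i = j then 1 else 0)"
    using matrix_inv_mult(1)[OF assms]
    by (auto simp: Finite_Cartesian_Product.vec_eq_iff Finite_Cartesian_Product.mat_def)
  then have "col $ k = Determinants.det (\<chi> i l. if l = k then (\<chi> i. if i = j then 1 else 0) $ i else A $ i $ l)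
      / Determinants.det A"
    unfolding cramer[OF det] by simp
  moreover have "(\<chi> i l. if l = k then (\<chi> i. if i = j then 1 else 0) $ i else A $ i $ l) =
      (\<chi> i l. if l = k then (if i = j then 1 else 0) else A $ i $ l :: 'k^'n^'n)"
    by (rule arg_cong[where f = vec_lambda], rule ext, rule arg_cong[where f = vec_lambda], rule ext) simp
  ultimately show ?thesis using det by (simp add: adjugate_def col_def)
qed

definition letter_val :: "('e \<Rightarrow> 'k::field^'n^'n) \<Rightarrow> 'e \<times> bool \<Rightarrow> 'k^'n^'n" where
  "letter_val x a = (if snd a then x (fst a) else matrix_inv (x (fst a)))"

definition letter_adj :: "('e \<Rightarrow> 'k::field^'n^'n) \<Rightarrow> 'e \<times> bool \<Rightarrow> 'k^'n^'n" where
  "letter_adj x a = (if snd a then x (fst a) else adjugate (x (fst a)))"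

definition letter_det :: "('e \<Rightarrow> 'k::field^'n^'n) \<Rightarrow> 'e \<times> bool \<Rightarrow> 'k" where
  "letter_det x a = (if snd a then 1 else Determinants.det (x (fst a)))"

definition letter_inverse :: "'e \<times> bool \<Rightarrow> 'e \<times> bool" where
  "letter_inverse a = (fst a, \<not> snd a)"

fun word_val :: "('e \<Rightarrow> 'k::field^'n^'n) \<Rightarrow> ('e \<times> bool) list \<Rightarrow> 'k^'n^'n" where
  "word_val x [] = Finite_Cartesian_Product.mat 1"
| "word_val x (a # w) = letter_val x a ** word_val x w"

fun word_adj :: "('e \<Rightarrow> 'k::field^'n^'n) \<Rightarrow> ('e \<times> bool) list \<Rightarrow> 'k^'n^'n" where
  "word_adj x [] = Finite_Cartesian_Product.mat 1"
| "word_adj x (a # w) = letter_adj x a ** word_adj x w"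

fun word_det :: "('e \<Rightarrow> 'k::field^'n^'n) \<Rightarrow> ('e \<times> bool) list \<Rightarrow> 'k" where
  "word_det x [] = 1"
| "word_det x (a # w) = letter_det x a * word_det x w"

lemma word_adj_eq:
  assumes "\<forall>i. invertible (x i)"
  shows "word_adj x w $ i $ j = word_det x w * word_val x w $ i $ j"
proof (induction w arbitrary: i j)
  case (Cons a w)
  have letter: "letter_adj x a $ i $ k = letter_det x a * letter_val x a $ i $ k" for i k
    using adjugate_eq_det_matrix_inv assms
    by (auto simp: letter_adj_def letter_det_def letter_val_def)
  have "word_adj x (a # w) $ i $ j = (\<Sum>k\<in>UNIV. letter_adj x a $ i $ k * word_adj x w $ k $ j)"
    by (simp add: matrix_matrix_mult_def)
  also have "\<dots> = (\<Sum>k\<in>UNIV. (letter_det x a * word_det x w) * (letter_val x a $ i $ k * word_val x w $ k $ j))"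
    using letter Cons by (intro sum.cong) (auto simp: mult_ac)
  also have "\<dots> = word_det x (a # w) * word_val x (a # w) $ i $ j"
    by (simp add: matrix_matrix_mult_def sum_distrib_left)
  finally show ?case .
qed simp

lemma word_det_nonzero:
  fixes x :: "'e \<Rightarrow> 'k::field^'n^'n"
  assumes "\<forall>i. invertible (x i)"
  shows "word_det x w \<noteq> 0"
  using assms by (induction w) (auto simp: letter_det_def invertible_det_nz)

lemma word_val_append: "word_val x (u @ v) = word_val x u ** word_val x v"
  by (induction u) (auto simp: matrix_mul_lid matrix_mul_assoc)

lemma word_val_inverse:
  assumes "\<forall>i. invertible (x i)"
  shows "word_val x w ** word_val x (rev (map letter_inverse w)) = Finite_Cartesian_Product.mat 1"
    and "word_val x (rev (map letter_inverse w)) ** word_val x w = Finite_Cartesian_Product.mat 1"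
proof (induction w)
  case (Cons a w)
  let ?W = "word_val x w" and ?W' = "word_val x (rev (map letter_inverse w))"
    and ?P = "letter_val x a" and ?P' = "letter_val x (letter_inverse a)"
  have P: "?P ** ?P' = Finite_Cartesian_Product.mat 1" "?P' ** ?P = Finite_Cartesian_Product.mat 1"
    using matrix_inv_mult[of "x (fst a)"] assms by (auto simp: letter_val_def letter_inverse_def)
  have W': "word_val x (rev (map letter_inverse (a # w))) = ?W' ** ?P'"
    by (simp add: word_val_append matrix_mul_rid)
  have "?P ** ?W ** (?W' ** ?P') = ?P ** (?W ** ?W') ** ?P'" by (simp add: matrix_mul_assoc)
  then show "word_val x (a # w) ** word_val x (rev (map letter_inverse (a # w))) =
      Finite_Cartesian_Product.mat 1"
    using Cons(1) P(1) W' by (simp add: matrix_mul_rid)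
  have "?W' ** ?P' ** (?P ** ?W) = ?W' ** (?P' ** ?P) ** ?W" by (simp add: matrix_mul_assoc)
  then show "word_val x (rev (map letter_inverse (a # w))) ** word_val x (a # w) =
      Finite_Cartesian_Product.mat 1"
    using Cons(2) P(2) W' by (simp add: matrix_mul_rid)
qed (simp_all add: matrix_mul_lid)

lemma gen_subgroup_eq_range_word_val:
  fixes x :: "'e \<Rightarrow> 'k::field^'n^'n"
  assumes "\<forall>i. invertible (x i)"
  shows "gen_subgroup (range x) = range (word_val x)"
proof
  show "gen_subgroup (range x) \<subseteq> range (word_val x)"
  proof
    fix g assume "g \<in> gen_subgroup (range x)"
    then show "g \<in> range (word_val x)"
    proof (induction rule: gen_subgroup.induct)
      case gs_one
      show ?case by (metis word_val.simps(1) rangeI)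
    next
      case (gs_gen s)
      then obtain i where "s = word_val x [(i, True)]"
        by (auto simp: letter_val_def matrix_mul_rid)
      then show ?case by blast
    next
      case (gs_mult a b)
      then obtain u v where "a = word_val x u" "b = word_val x v" by auto
      then have "a ** b = word_val x (u @ v)" by (simp add: word_val_append)
      then show ?case by blast
    next
      case (gs_inv a)
      then obtain u where "a = word_val x u" by auto
      then have "matrix_inv a = word_val x (rev (map letter_inverse u))"
        using word_val_inverse[OF assms] matrix_inv_unique by blast
      then show ?case by blast
    qed
  qed
next
  have "word_val x w \<in> gen_subgroup (range x)" for w
  proof (induction w)
    case (Cons a w)
    have "letter_val x a \<in> gen_subgroup (range x)"
      by (auto simp: letter_val_def intro: gen_subgroup.gs_gen gen_subgroup.gs_inv)
    then show ?case using Cons by (simp add: gen_subgroup.gs_mult)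
  qed (simp add: gen_subgroup.gs_one)
  then show "range (word_val x) \<subseteq> gen_subgroup (range x)" by blast
qed

lemma word_val_in_subgroup:
  assumes "mat_subgroup G" "\<forall>i. x i \<in> G"
  shows "word_val x w \<in> G"
  using assms by (induction w) (auto simp: mat_subgroup_def letter_val_def)

section \<open>Polynomiality in the tuple\<close>

definition matrix_polyfun :: "(('c \<Rightarrow> 'k::comm_ring_1) \<Rightarrow> 'k^'n^'n) \<Rightarrow> bool" where
  "matrix_polyfun M \<longleftrightarrow> (\<forall>i j. (\<lambda>z. M z $ i $ j) \<in> polyfun)"

lemma matrix_polyfun_one: "matrix_polyfun (\<lambda>z. Finite_Cartesian_Product.mat 1)"
  by (simp add: matrix_polyfun_def Finite_Cartesian_Product.mat_def polyfun.pf_const)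

lemma matrix_polyfun_mult:
  "matrix_polyfun M \<Longrightarrow> matrix_polyfun N \<Longrightarrow> matrix_polyfun (\<lambda>z. M z ** N z)"
  unfolding matrix_polyfun_def matrix_matrix_mult_def by (auto intro!: polyfun_sum polyfun.pf_mult)

lemma polyfun_det: "matrix_polyfun M \<Longrightarrow> (\<lambda>z. Determinants.det (M z)) \<in> polyfun"
  unfolding Determinants.det_def matrix_polyfun_def
  by (intro polyfun_sum polyfun_cmult polyfun_prod) (auto simp: finite_permutations)

lemma matrix_polyfun_adjugate:
  fixes M :: "('c \<Rightarrow> 'k::field) \<Rightarrow> 'k^'n^'n"
  assumes "matrix_polyfun M"
  shows "matrix_polyfun (\<lambda>z. adjugate (M z))"
proof -
  have "(\<lambda>z. adjugate (M z) $ k $ j) \<in> polyfun" for k j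
  proof -
    have "matrix_polyfun (\<lambda>z. (\<chi> i l. if l = k then (if i = j then 1 else 0) else M z $ i $ l) :: 'k^'n^'n)"
      using assms unfolding matrix_polyfun_def by (auto intro!: polyfun_if simp: polyfun.pf_const)
    from polyfun_det[OF this] show ?thesis by (simp add: adjugate_def)
  qed
  then show ?thesis by (simp add: matrix_polyfun_def)
qed

lemma polyfun_minor:
  assumes "\<And>b l. (\<lambda>y. z y b l) \<in> polyfun"
  shows "(\<lambda>y. minor r ls (z y)) \<in> polyfun"
proof -
  have "minor r ls (z y) =
     (\<Sum>p\<in>{p. p permutes {0..<r}}. of_int (sign p) * (\<Prod>i\<in>{0..<r}. z y (p i) (ls i)))" for y
  proof -
    have "minor r ls (z y) = (\<Sum>p\<in>{p. p permutes {0..<r}}. of_int (sign p) *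
        (\<Prod>i\<in>{0..<r}. Matrix.mat r r (\<lambda>(a, b). z y b (ls a)) $$ (i, p i)))"
      unfolding minor_def by (rule det_def') simp
    also have "\<dots> = (\<Sum>p\<in>{p. p permutes {0..<r}}. of_int (sign p) * (\<Prod>i\<in>{0..<r}. z y (p i) (ls i)))"
      by (intro sum.cong refl arg_cong2[where f = "(*)"] prod.cong) (auto dest: permutes_in_image)
    finally show ?thesis .
  qed
  then show ?thesis
    using assms by (simp only:) (intro polyfun_sum polyfun_cmult polyfun_prod; simp add: finite_permutations)
qed

definition tuple_of_coords :: "('e \<times> 'n \<times> 'n \<Rightarrow> 'k) \<Rightarrow> 'e \<Rightarrow> 'k^'n^'n" where
  "tuple_of_coords z = (\<lambda>e. \<chi> i j. z (e, i, j))"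

lemma tuple_of_coords_tup_coords: "tuple_of_coords (tup_coords x) = x"
  by (simp add: tuple_of_coords_def tup_coords_def Finite_Cartesian_Product.vec_eq_iff)

lemma matrix_polyfun_tuple_of_coords: "matrix_polyfun (\<lambda>z. tuple_of_coords z e)"
  by (simp add: matrix_polyfun_def tuple_of_coords_def polyfun.pf_var)

lemma polyfun_word_det: "(\<lambda>z. word_det (tuple_of_coords z) w) \<in> polyfun"
proof (induction w)
  case (Cons a w)
  have "(\<lambda>z. letter_det (tuple_of_coords z) a) \<in> polyfun"
    using polyfun_det[OF matrix_polyfun_tuple_of_coords]
    by (cases "snd a") (auto simp: letter_det_def polyfun.pf_const)
  then show ?case using Cons polyfun.pf_mult by fastforce
qed (simp add: polyfun.pf_const)

lemma matrix_polyfun_word_adj: "matrix_polyfun (\<lambda>z. word_adj (tuple_of_coords z) w)"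
proof (induction w)
  case (Cons a w)
  have "matrix_polyfun (\<lambda>z. letter_adj (tuple_of_coords z) a)"
    using matrix_polyfun_adjugate[OF matrix_polyfun_tuple_of_coords] matrix_polyfun_tuple_of_coords
    by (cases "snd a") (auto simp: letter_adj_def)
  then show ?case using Cons matrix_polyfun_mult by fastforce
qed (simp add: matrix_polyfun_one)

text \<open>For invertible x this is a nonzero multiple of the monomial l of word_val x w
  (word_monomial_eq), but unlike that monomial it is a polynomial in the entries of x.\<close>
definition word_monomial :: "nat \<Rightarrow> ('e \<Rightarrow> 'k::field^'n^'n) \<Rightarrow> ('e \<times> bool) list \<Rightarrow> ('n \<times> 'n) list \<Rightarrow> 'k" where
  "word_monomial d x w l = word_det x w ^ (d - length l) * monomial (mat_coords (word_adj x w)) l"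

lemma polyfun_word_monomial: "(\<lambda>z. word_monomial d (tuple_of_coords z) w l) \<in> polyfun"
  unfolding word_monomial_def
proof (rule polyfun.pf_mult)
  show "(\<lambda>z. word_det (tuple_of_coords z) w ^ (d - length l)) \<in> polyfun"
    by (rule polyfun_power[OF polyfun_word_det])
  show "(\<lambda>z. monomial (mat_coords (word_adj (tuple_of_coords z) w)) l) \<in> polyfun"
    using matrix_polyfun_word_adj
    by (intro polyfun_monomial_comp) (auto simp: matrix_polyfun_def mat_coords_def split: prod.splits)
qed

lemma word_monomial_eq:
  assumes "\<forall>i. invertible (x i)" "l \<in> monomials_upto d"
  shows "word_monomial d x w l = word_det x w ^ d * monomial (mat_coords (word_val x w)) l"
proof -
  have "monomial (mat_coords (word_adj x w)) l =
      word_det x w ^ length l * monomial (mat_coords (word_val x w)) l"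
    by (induction l) (auto simp: monomial_def mat_coords_def word_adj_eq[OF assms(1)] mult_ac)
  moreover have "word_det x w ^ (d - length l) * word_det x w ^ length l = word_det x w ^ d"
    using assms(2) by (simp add: monomials_upto_def power_add[symmetric])
  ultimately show ?thesis by (simp add: word_monomial_def mult.assoc[symmetric])
qed

lemma sum_word_monomial:
  assumes "\<forall>i. invertible (x i)"
  shows "(\<Sum>l\<in>monomials_upto d. c l * word_monomial d x w l) =
    word_det x w ^ d * (\<Sum>l\<in>monomials_upto d. c l * monomial (mat_coords (word_val x w)) l)"
  unfolding sum_distrib_left
  by (intro sum.cong refl) (simp add: word_monomial_eq[OF assms] mult.left_commute)

section \<open>Generic tuples\<close>

lemma zdense_gen_subgroup_iff_word_relations:
  fixes G :: "('k::field^'n^'n) set"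
  assumes G: "mat_subgroup G" and x: "\<forall>i. x i \<in> G"
  shows "zdense_in mat_coords G (gen_subgroup (range x)) \<longleftrightarrow>
    (\<forall>d c. (\<forall>w. (\<Sum>l\<in>monomials_upto d. c l * word_monomial d x w l) = 0) \<longrightarrow>
      (\<forall>g\<in>G. (\<Sum>l\<in>monomials_upto d. c l * monomial (mat_coords g) l) = 0))"
proof -
  have inv: "\<forall>i. invertible (x i)" using G x by (auto simp: mat_subgroup_def GLn_def)
  have "range (word_val x) \<subseteq> G" using word_val_in_subgroup[OF G x] by blast
  then have "zdense_in mat_coords G (gen_subgroup (range x)) \<longleftrightarrow>
      (\<forall>d c. (\<forall>g\<in>range (word_val x). (\<Sum>l\<in>monomials_upto d. c l * monomial (mat_coords g) l) = 0) \<longrightarrow>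
        (\<forall>g\<in>G. (\<Sum>l\<in>monomials_upto d. c l * monomial (mat_coords g) l) = 0))"
    unfolding gen_subgroup_eq_range_word_val[OF inv] by (rule zdense_in_iff_monomial_relations)
  then show ?thesis using word_det_nonzero[OF inv] by (simp add: sum_word_monomial[OF inv])
qed

definition scaled_monomial_vectors :: "('k::comm_ring_1^'n^'n) set \<Rightarrow> nat \<Rightarrow> (('n \<times> 'n) list \<Rightarrow> 'k) set" where
  "scaled_monomial_vectors G d =
    {v. \<exists>s g. g \<in> G \<and> (\<forall>l\<in>monomials_upto d. v l = s * monomial (mat_coords g) l)}"

lemma relation_on_scaled_monomial_vectors:
  assumes "\<forall>g\<in>G. (\<Sum>l\<in>monomials_upto d. c l * monomial (mat_coords g) l) = 0"
    and "v \<in> scaled_monomial_vectors G d"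
  shows "(\<Sum>l\<in>monomials_upto d. c l * v l) = 0"
proof -
  from assms(2) obtain s g where "g \<in> G" "\<forall>l\<in>monomials_upto d. v l = s * monomial (mat_coords g) l"
    by (auto simp: scaled_monomial_vectors_def)
  then have "(\<Sum>l\<in>monomials_upto d. c l * v l) =
      s * (\<Sum>l\<in>monomials_upto d. c l * monomial (mat_coords g) l)"
    by (simp add: sum_distrib_left mult.left_commute)
  with assms(1) \<open>g \<in> G\<close> show ?thesis by simp
qed

lemma word_monomial_in_scaled_monomial_vectors:
  fixes G :: "('k::field^'n^'n) set"
  assumes G: "mat_subgroup G" and x: "\<forall>i. x i \<in> G"
  shows "word_monomial d x w \<in> scaled_monomial_vectors G d"
proof -
  have "\<forall>i. invertible (x i)" using G x by (auto simp: mat_subgroup_def GLn_def)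
  then show ?thesis
    using word_val_in_subgroup[OF G x] word_monomial_eq unfolding scaled_monomial_vectors_def
    by (intro CollectI exI[of _ "word_det x w ^ d"] exI[of _ "word_val x w"]) auto
qed

lemma zclosed_in_minor_zero_set:
  "zclosed_in tup_coords \<Omega> {x\<in>\<Omega>. minor r ls (\<lambda>b. word_monomial d x (ws b)) = 0}"
proof -
  let ?p = "\<lambda>z. minor r ls (\<lambda>b. word_monomial d (tuple_of_coords z) (ws b))"
  have "?p \<in> polyfun" by (intro polyfun_minor polyfun_word_monomial)
  then show ?thesis
    unfolding zclosed_in_def zariski_closed_def
    by (intro conjI exI[of _ "{z. ?p z = 0}"] exI[of _ "{?p}"]) (auto simp: tuple_of_coords_tup_coords)
qed

lemma generic_tuples_generate_dense:
  fixes G :: "('k::field^'n^'n) set" and \<Omega> :: "('e \<Rightarrow> 'k^'n^'n) set"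
  assumes G: "mat_subgroup G" and \<Omega>: "\<And>x. x \<in> \<Omega> \<Longrightarrow> \<forall>i. x i \<in> G"
    and x0: "x0 \<in> \<Omega>" "zdense_in mat_coords G (gen_subgroup (range x0))"
  shows "\<exists>F :: nat \<Rightarrow> ('e \<Rightarrow> 'k^'n^'n) set.
           (\<forall>m. zclosed_in tup_coords \<Omega> (F m) \<and> x0 \<notin> F m) \<and>
           \<Omega> - (\<Union>m. F m) \<subseteq> {x\<in>\<Omega>. zdense_in mat_coords G (gen_subgroup (range x))}"
proof -
  note dense_iff = zdense_gen_subgroup_iff_word_relations[OF G \<Omega>]
  let ?V = "scaled_monomial_vectors G"
  have "\<forall>d. \<exists>r ws ls. ls ` {..<r} \<subseteq> monomials_upto d \<and> minor r ls (\<lambda>b. word_monomial d x0 (ws b)) \<noteq> 0 \<and>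
    (\<forall>z c. (\<forall>b<r. z b \<in> ?V d) \<longrightarrow> minor r ls z \<noteq> 0 \<longrightarrow>
      (\<forall>b<r. (\<Sum>l\<in>monomials_upto d. c l * z b l) = 0) \<longrightarrow>
      (\<forall>v\<in>?V d. (\<Sum>l\<in>monomials_upto d. c l * v l) = 0))"
  proof (intro allI spanning_minor[OF finite_monomials_upto])
    fix d c v assume "\<forall>w. (\<Sum>l\<in>monomials_upto d. c l * word_monomial d x0 w l) = 0" "v \<in> ?V d"
    then show "(\<Sum>l\<in>monomials_upto d. c l * v l) = 0"
      using relation_on_scaled_monomial_vectors dense_iff[OF x0(1)] x0(2) by blast
  qed
  then obtain r ws ls where "\<forall>d. ls d ` {..<r d} \<subseteq> monomials_upto d \<and>
      minor (r d) (ls d) (\<lambda>b. word_monomial d x0 (ws d b)) \<noteq> 0 \<and>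
      (\<forall>z c. (\<forall>b<r d. z b \<in> ?V d) \<longrightarrow> minor (r d) (ls d) z \<noteq> 0 \<longrightarrow>
        (\<forall>b<r d. (\<Sum>l\<in>monomials_upto d. c l * z b l) = 0) \<longrightarrow>
        (\<forall>v\<in>?V d. (\<Sum>l\<in>monomials_upto d. c l * v l) = 0))"
    unfolding choice_iff by (elim exE) blast
  then have x0_minor: "\<And>d. minor (r d) (ls d) (\<lambda>b. word_monomial d x0 (ws d b)) \<noteq> 0"
    and spanning: "\<And>d z c. \<forall>b<r d. z b \<in> ?V d \<Longrightarrow> minor (r d) (ls d) z \<noteq> 0 \<Longrightarrow>
      \<forall>b<r d. (\<Sum>l\<in>monomials_upto d. c l * z b l) = 0 \<Longrightarrow>
      \<forall>v\<in>?V d. (\<Sum>l\<in>monomials_upto d. c l * v l) = 0"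
    by blast+
  define F where "F d = {x\<in>\<Omega>. minor (r d) (ls d) (\<lambda>b. word_monomial d x (ws d b)) = 0}" for d
  have "zdense_in mat_coords G (gen_subgroup (range x))" if x: "x \<in> \<Omega>" "\<forall>d. x \<notin> F d" for x
    unfolding dense_iff[OF x(1)]
  proof (intro allI impI ballI)
    fix d c g
    assume c: "\<forall>w. (\<Sum>l\<in>monomials_upto d. c l * word_monomial d x w l) = 0" and "g \<in> G"
    have "\<forall>v\<in>?V d. (\<Sum>l\<in>monomials_upto d. c l * v l) = 0"
      using spanning[of d "\<lambda>b. word_monomial d x (ws d b)" c] c x
        word_monomial_in_scaled_monomial_vectors[OF G \<Omega>[OF x(1)]] by (simp add: F_def)
    moreover have "monomial (mat_coords g) \<in> ?V d"
      using \<open>g \<in> G\<close> unfolding scaled_monomial_vectors_def by (intro CollectI exI[of _ 1] exI[of _ g]) simp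
    ultimately show "(\<Sum>l\<in>monomials_upto d. c l * monomial (mat_coords g) l) = 0" by blast
  qed
  moreover have "zclosed_in tup_coords \<Omega> (F d)" for d
    unfolding F_def by (rule zclosed_in_minor_zero_set)
  moreover have "x0 \<notin> F d" for d using x0_minor by (simp add: F_def)
  ultimately show ?thesis by (intro exI[of _ F]) blast
qed

text \<open>The remaining hypotheses are what
  make the conclusion meaningful: over an uncountable field the countably many proper closed
  subsets F m cannot cover the irreducible variety Omega.\<close>

theorem lemma2p7:
  fixes G :: "('k::field^'n^'n) set"
    and C :: "'e::finite \<Rightarrow> ('k^'n^'n) set"
    and \<Omega> :: "('e \<Rightarrow> 'k^'n^'n) set"
  assumes "alg_closed_field TYPE('k)"
    and "uncountable (UNIV :: 'k set)"
    and "simple_algebraic_group G"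
    and "\<forall>i. \<exists>c\<in>G. \<not> central_in G c \<and> C i = conj_class G c"
    and "\<Omega> = {x. \<forall>i. x i \<in> C i}"
    and "\<exists>x\<in>\<Omega>. zdense_in mat_coords G (gen_subgroup (range x))"
  shows "\<exists>F :: nat \<Rightarrow> ('e \<Rightarrow> 'k^'n^'n) set.
           (\<forall>m. zclosed_in tup_coords \<Omega> (F m) \<and> F m \<noteq> \<Omega>) \<and>
           \<Omega> - (\<Union>m. F m) \<subseteq> {x\<in>\<Omega>. zdense_in mat_coords G (gen_subgroup (range x))}"
proof -
  have G: "mat_subgroup G"
    using assms(3) by (simp add: simple_algebraic_group_def algebraic_group_def)
  have \<Omega>: "\<forall>i. x i \<in> G" if "x \<in> \<Omega>" for x
  proof
    fix i
    obtain c where "c \<in> G" "C i = conj_class G c" using assms(4) by blast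
    moreover have "x i \<in> C i" using that assms(5) by blast
    ultimately show "x i \<in> G" using G by (auto simp: conj_class_def mat_subgroup_def)
  qed
  obtain x0 where x0: "x0 \<in> \<Omega>" "zdense_in mat_coords G (gen_subgroup (range x0))"
    using assms(6) by blast
  have "\<exists>F :: nat \<Rightarrow> ('e \<Rightarrow> 'k^'n^'n) set.
      (\<forall>m. zclosed_in tup_coords \<Omega> (F m) \<and> x0 \<notin> F m) \<and>
      \<Omega> - (\<Union>m. F m) \<subseteq> {x\<in>\<Omega>. zdense_in mat_coords G (gen_subgroup (range x))}"
    by (rule generic_tuples_generate_dense[OF G \<Omega> x0])
  with x0(1) show ?thesis by blast
qed

end
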